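(* Let $\alpha>0$ and $p\in\big(0,\max\{\alpha/2,\alpha-1\}\big]$. Then $$\widehat M_{p,\alpha}:=\sup\Big\{\frac{\alpha^2}{4p^2}\,\frac{z^2}{\Phi_{p,\alpha}(z)}:\ z\in\mathbb R\setminus\{0\}\Big\}<\infty,$$ and the Legendre transform satisfies $\Phi^*_{p,\alpha}(\xi)\le\widehat M_{p,\alpha}\big(\tfrac p\alpha\xi\big)^2$ for all $\xi\in\mathbb R$. Moreover, $\widehat M_{p,\alpha}\ge1/4$; for $p=1/2$ and $\alpha\ge1$ one has $\widehat M_{1/2,\alpha}\le\alpha/2$ and $\widehat M_{1/2,1}=1/2$; and for $p>0$ and $\alpha=p+1$ one has $\widehat M_{p,p+1}=1/4$.
   Context: For $\alpha>0$, $p>0$: $\Phi_{p,\alpha}(z)=\frac{\alpha}{p-1}\big((z+1)^{(p-1)/p}-1\big)\big((z+1)^{\alpha/p}-1\big)$ for $z>-1$ if $p\ne1$, $\Phi_{1,\alpha}(z)=\alpha\log(z+1)\big((z+1)^\alpha-1\big)$ for $z>-1$ (the limit $p\to1$), and $\Phi_{p,\alpha}(z)=+\infty$ for $z\le-1$. $\Phi^*_{p,\alpha}(\xi)=\sup_z\{\xi z-\Phi_{p,\alpha}(z)\}$. *)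

theory Defs
  imports "HOL-Analysis.Analysis"
begin

definition Phi :: "real \<Rightarrow> real \<Rightarrow> real \<Rightarrow> ereal" where
  "Phi p \<alpha> z =
     (if z \<le> -1 then \<infinity>
      else if p = 1 then ereal (\<alpha> * ln (z + 1) * ((z + 1) powr \<alpha> - 1))
      else ereal (\<alpha> / (p - 1) * ((z + 1) powr ((p - 1) / p) - 1) * ((z + 1) powr (\<alpha> / p) - 1)))"

definition PhiStar :: "real \<Rightarrow> real \<Rightarrow> real \<Rightarrow> ereal" where
  "PhiStar p \<alpha> \<xi> = (SUP z. ereal (\<xi> * z) - Phi p \<alpha> z)"

text \<open>The constant hat M_{p,alpha} (in the extended reals; x / infinity = 0).\<close>
definition Mhat :: "real \<Rightarrow> real \<Rightarrow> ereal" where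
  "Mhat p \<alpha> = (SUP z \<in> UNIV - {0}. ereal (\<alpha>\<^sup>2 / (4 * p\<^sup>2) * z\<^sup>2) / Phi p \<alpha> z)"

end

theory Submission
  imports Defs "HOL-Real_Asymp.Real_Asymp"
begin

text \<open>Substituting z + 1 = exp s turns \<Phi>(z) into (\<alpha>/p)^2 s^2 E(a s) E(b s), where
  E = exprel, E(x) = (exp x - 1)/x, a = (p-1)/p and b = \<alpha>/p, while z = s E(s). Hence the quotient in the
  definition of hat M is E(s)^2 / (4 E(a s) E(b s)), and everything reduces to three properties of E:
  it is positive, increasing, and midpoint log-convex. In the admissible range of p these bound the
  quotient (log-convexity when a + b \<ge> 2, monotonicity and elementary estimates of E otherwise);
  it tends to 1/4 as s \<rightarrow> 0; it is at most 1/4 when \<alpha> = p + 1 (then a + b = 2); and for p = 1/2 it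
  equals exp s E(s) / (4 E(2\<alpha>s)), which tends to 1/2 as s \<rightarrow> \<infinity> when \<alpha> = 1.
  The bound on the Legendre transform is Young's inequality for the quadratic (p/\<alpha>)^2 hat M \<xi>^2,
  since the definition of hat M says exactly z^2 \<le> 4 hat M (p/\<alpha>)^2 \<Phi>(z).\<close>

definition exprel :: "real \<Rightarrow> real" where
  "exprel x = (if x = 0 then 1 else (exp x - 1) / x)"

lemma exprel_times: "x * exprel x = exp x - 1"
  by (simp add: exprel_def)

lemma exprel_ge_1: "x \<ge> 0 \<Longrightarrow> exprel x \<ge> 1"
  using exp_ge_add_one_self[of x] by (auto simp: exprel_def field_simps)

lemma exprel_le_1: "x \<le> 0 \<Longrightarrow> exprel x \<le> 1"
  using exp_ge_add_one_self[of x] by (auto simp: exprel_def field_simps)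

lemma exprel_pos: "exprel x > 0"
proof (cases "x = 0")
  case False
  then have "(exp x - 1) / x > 0"
    by (cases "x > 0") (auto intro: divide_neg_neg)
  with False show ?thesis by (simp add: exprel_def)
qed (simp add: exprel_def)

lemma exprel_nonzero [simp]: "exprel x \<noteq> 0"
  using exprel_pos[of x] by linarith

lemma exprel_minus: "exprel (- x) = exp (- x) * exprel x"
  by (cases "x = 0") (auto simp: exprel_def field_simps exp_minus)

lemma exprel_double: "exprel (2 * x) = exprel x * (exp x + 1) / 2"
proof (cases "x = 0")
  case False
  have "exp (2 * x) = exp x * exp x" by (metis exp_add mult_2)
  with False show ?thesis by (simp add: exprel_def field_simps)
qed (simp add: exprel_def)

text \<open>exprel is the slope of the chord of the convex function exp between 0 and x.\<close>
lemma mono_exprel: "mono exprel"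
proof (rule monoI)
  fix x y :: real assume "x \<le> y"
  have slope: "exprel x = (exp x - exp 0) / (x - 0)" if "x \<noteq> 0" for x
    using that by (simp add: exprel_def)
  have "exprel x \<le> exprel y" if "x < y" for x y
  proof -
    consider "0 < x" | "y < 0" | "x = 0" | "y = 0" | "x < 0" "0 < y"
      by linarith
    then show ?thesis
    proof cases
      case 1 with \<open>x < y\<close> show ?thesis
        using convex_on_slope_le[OF exp_convex, of 0 y x] by (simp add: slope diff_divide_distrib)
    next
      case 2 with \<open>x < y\<close> show ?thesis
        using convex_on_slope_le[OF exp_convex, of x 0 y] by (simp add: slope)
    next
      case 3 with \<open>x < y\<close> show ?thesis
        using exprel_ge_1[of y] by (simp add: exprel_def)
    next
      case 4 with \<open>x < y\<close> show ?thesis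
        using exprel_le_1[of x] by (simp add: exprel_def)
    next
      case 5 then show ?thesis
        using convex_on_slope_le[OF exp_convex, of x y 0] by (simp add: slope diff_divide_distrib)
    qed
  qed
  with \<open>x \<le> y\<close> show "exprel x \<le> exprel y"
    by (cases "x = y") auto
qed

lemma isCont_exprel: "isCont exprel x"
proof (cases "x = 0")
  case True
  have "((\<lambda>h. (exp (0 + h) - exp 0) / h) \<longlongrightarrow> exp 0) (at (0::real))"
    using DERIV_exp[of 0] by (simp add: DERIV_def)
  then have "((\<lambda>h. (exp h - 1) / h) \<longlongrightarrow> exprel 0) (at 0)"
    by (simp add: exprel_def)
  moreover have "\<forall>\<^sub>F h in at 0. (exp h - 1) / h = exprel h"
    by (auto simp: exprel_def eventually_at_filter)
  ultimately show ?thesis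
    using True by (simp add: isCont_def tendsto_cong)
next
  case False
  have "\<forall>\<^sub>F h in nhds x. h \<in> - {0}"
    using False by (intro eventually_nhds_in_open) auto
  then have "\<forall>\<^sub>F h in nhds x. (exp h - 1) / h = exprel h"
    by eventually_elim (simp add: exprel_def)
  moreover have "isCont (\<lambda>h. (exp h - 1) / h) x"
    using False by (intro continuous_intros) auto
  ultimately show ?thesis
    by (simp add: isCont_cong)
qed

lemma isCont_exprel' [continuous_intros]: "isCont f x \<Longrightarrow> isCont (\<lambda>x. exprel (f x)) x"
  by (rule isCont_o2[OF _ isCont_exprel])

lemma sinh_div_mono:
  fixes u v :: real
  assumes "v\<^sup>2 < u\<^sup>2"
  shows "(sinh v)\<^sup>2 * u\<^sup>2 \<le> (sinh u)\<^sup>2 * v\<^sup>2"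
proof (cases "v = 0")
  case False
  have "\<bar>v\<bar> < \<bar>u\<bar>"
    using power2_less_imp_less[of "\<bar>v\<bar>" "\<bar>u\<bar>"] assms by simp
  have "convex_on {0..} sinh"
    by (rule f''_ge0_imp_convex[where f' = cosh and f'' = sinh]) (auto intro!: derivative_eq_intros)
  then have "(sinh 0 - sinh \<bar>v\<bar>) / (0 - \<bar>v\<bar>) \<le> (sinh 0 - sinh \<bar>u\<bar>) / (0 - \<bar>u\<bar>)"
    using convex_on_slope_le(1)[of "{0..}" sinh 0 "\<bar>u\<bar>" "\<bar>v\<bar>"] False \<open>\<bar>v\<bar> < \<bar>u\<bar>\<close> by simp
  then have "sinh \<bar>v\<bar> / \<bar>v\<bar> \<le> sinh \<bar>u\<bar> / \<bar>u\<bar>"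
    by simp
  then have "(sinh \<bar>v\<bar> / \<bar>v\<bar>)\<^sup>2 \<le> (sinh \<bar>u\<bar> / \<bar>u\<bar>)\<^sup>2"
    by (rule power_mono) simp
  then have "(sinh v)\<^sup>2 / v\<^sup>2 \<le> (sinh u)\<^sup>2 / u\<^sup>2"
    by (simp add: power_divide)
  with False \<open>\<bar>v\<bar> < \<bar>u\<bar>\<close> show ?thesis
    by (simp add: field_simps)
qed simp

lemma exprel_double_sinh: "w \<noteq> 0 \<Longrightarrow> exprel (2 * w) = exp w * sinh w / w"
proof -
  assume "w \<noteq> 0"
  have "exp w * sinh w / w = (exp w * exp w - 1) / 2 / w"
    by (simp add: sinh_field_def right_diff_distrib exp_minus_inverse)
  also have "\<dots> = (exp w - 1) / w * (exp w + 1) / 2"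
    using \<open>w \<noteq> 0\<close> by (simp add: field_simps)
  also have "\<dots> = exprel (2 * w)"
    using \<open>w \<noteq> 0\<close> by (simp add: exprel_double exprel_def[of w])
  finally show ?thesis ..
qed

lemma divide_le_divide_diff:
  fixes a b c d :: real
  assumes "0 < b" "b \<noteq> d" "(b - d) * (a * d - c * b) \<ge> 0"
  shows "a / b \<le> (a - c) / (b - d)"
proof (cases "d < b")
  case True
  with assms have "a * d - c * b \<ge> 0"
    by (simp add: zero_le_mult_iff)
  with True assms(1) show ?thesis
    by (simp add: field_simps)
next
  case False
  with assms have "a * d - c * b \<le> 0"
    by (simp add: zero_le_mult_iff)
  with False assms show ?thesis
    by (simp add: field_simps)
qed

text \<open>Writing x = 2(u+v), y = 2(u-v) and using exprel (2w) = exp w * sinh w / w, the claim becomes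
  (sinh u / u)^2 \<le> (sinh^2 u - sinh^2 v) / (u^2 - v^2), which is the monotonicity of sinh w / w in |w|.\<close>
lemma exprel_midpoint_log_convex_nondegenerate:
  assumes "x \<noteq> 0" "y \<noteq> 0" "x + y \<noteq> 0"
  shows "(exprel ((x + y) / 2))\<^sup>2 \<le> exprel x * exprel y"
proof -
  define u where "u = (x + y) / 4"
  define v where "v = (x - y) / 4"
  have x: "x = 2 * (u + v)" and y: "y = 2 * (u - v)" and m: "(x + y) / 2 = 2 * u"
    by (simp_all add: u_def v_def field_simps)
  have nz: "u \<noteq> 0" "u + v \<noteq> 0" "u - v \<noteq> 0"
    using assms by (auto simp: u_def v_def field_simps)
  have "sinh (u + v) * sinh (u - v) = (sinh u)\<^sup>2 * (cosh v)\<^sup>2 - (cosh u)\<^sup>2 * (sinh v)\<^sup>2"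
    by (simp add: sinh_add sinh_diff power2_eq_square algebra_simps)
  then have sinh_prod: "sinh (u + v) * sinh (u - v) = (sinh u)\<^sup>2 - (sinh v)\<^sup>2"
    by (simp add: cosh_square_eq algebra_simps)
  have "exprel x * exprel y
      = (exp (u + v) * exp (u - v)) * (sinh (u + v) * sinh (u - v)) / ((u + v) * (u - v))"
    using exprel_double_sinh[OF nz(2)] exprel_double_sinh[OF nz(3)] by (simp add: x y)
  also have "exp (u + v) * exp (u - v) = exp (2 * u)"
    by (simp only: exp_add[symmetric]) simp
  also have "(u + v) * (u - v) = u\<^sup>2 - v\<^sup>2"
    by (simp add: power2_eq_square algebra_simps)
  finally have prod: "exprel x * exprel y = exp (2 * u) * (((sinh u)\<^sup>2 - (sinh v)\<^sup>2) / (u\<^sup>2 - v\<^sup>2))"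
    by (simp add: sinh_prod)
  have sq: "(exprel ((x + y) / 2))\<^sup>2 = exp (2 * u) * ((sinh u)\<^sup>2 / u\<^sup>2)"
    using nz by (simp add: m exprel_double_sinh power_divide power_mult_distrib exp_double[symmetric])
  have "u\<^sup>2 > 0" "u\<^sup>2 \<noteq> v\<^sup>2"
    using nz by (auto simp: power2_eq_iff)
  have "(u\<^sup>2 - v\<^sup>2) * ((sinh u)\<^sup>2 * v\<^sup>2 - (sinh v)\<^sup>2 * u\<^sup>2) \<ge> 0"
  proof (cases "v\<^sup>2 < u\<^sup>2")
    case True
    then have "(sinh v)\<^sup>2 * u\<^sup>2 \<le> (sinh u)\<^sup>2 * v\<^sup>2"
      by (rule sinh_div_mono)
    with True show ?thesis
      by (intro mult_nonneg_nonneg) auto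
  next
    case False
    with \<open>u\<^sup>2 \<noteq> v\<^sup>2\<close> have "u\<^sup>2 < v\<^sup>2" by simp
    then have "(sinh u)\<^sup>2 * v\<^sup>2 \<le> (sinh v)\<^sup>2 * u\<^sup>2"
      by (rule sinh_div_mono)
    with \<open>u\<^sup>2 < v\<^sup>2\<close> show ?thesis
      by (intro mult_nonpos_nonpos) auto
  qed
  then have "(sinh u)\<^sup>2 / u\<^sup>2 \<le> ((sinh u)\<^sup>2 - (sinh v)\<^sup>2) / (u\<^sup>2 - v\<^sup>2)"
    using \<open>u\<^sup>2 > 0\<close> \<open>u\<^sup>2 \<noteq> v\<^sup>2\<close> by (intro divide_le_divide_diff)
  then show ?thesis
    unfolding prod sq by (rule mult_left_mono) simp
qed

text \<open>The degenerate cases follow by continuity along the line (x + t, y + 2t), which meets each of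
  the lines x = 0, y = 0, x + y = 0 only once.\<close>
lemma exprel_midpoint_log_convex: "(exprel ((x + y) / 2))\<^sup>2 \<le> exprel x * exprel y"
proof -
  define f where "f t = exprel (x + t) * exprel (y + 2 * t) - (exprel ((x + t + (y + 2 * t)) / 2))\<^sup>2" for t
  have "isCont f 0"
    unfolding f_def by (intro continuous_intros) auto
  moreover have "\<forall>\<^sub>F t in at 0. 0 \<le> f t"
    using eventually_neq_at_within[of "- x" 0 UNIV] eventually_neq_at_within[of "- y / 2" 0 UNIV]
      eventually_neq_at_within[of "- (x + y) / 3" 0 UNIV]
  proof eventually_elim
    case (elim t)
    then show ?case
      using exprel_midpoint_log_convex_nondegenerate[of "x + t" "y + 2 * t"]
      by (simp add: f_def field_simps)
  qed
  ultimately have "0 \<le> f 0"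
    using tendsto_lowerbound[of f "f 0" "at 0"] by (simp add: isCont_def)
  then show ?thesis by (simp add: f_def)
qed

lemma exprel_le_exp: "x \<ge> 0 \<Longrightarrow> exprel x \<le> exp x"
proof -
  assume "x \<ge> 0"
  have "exp (- x) * exprel x = exprel (- x)"
    by (simp add: exprel_minus)
  also have "\<dots> \<le> 1"
    using \<open>x \<ge> 0\<close> by (intro exprel_le_1) simp
  finally have "exp x * (exp (- x) * exprel x) \<le> exp x * 1"
    by (intro mult_left_mono) simp_all
  then show ?thesis
    by (simp add: mult.assoc[symmetric] exp_minus_inverse)
qed

lemma exprel_times_one_minus_ge_1: "x \<le> 0 \<Longrightarrow> 1 \<le> exprel x * (1 - x)"
proof (cases "x = 0")
  case False
  assume "x \<le> 0"
  have "exp x * (1 - x) \<le> 1"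
    using exp_ge_add_one_self[of "- x"] by (simp add: exp_minus field_simps)
  with \<open>x \<le> 0\<close> False show ?thesis
    by (simp add: exprel_def field_simps)
qed (simp add: exprel_def)

lemma exprel_le_scaled:
  assumes "1 \<le> b" "x < 0"
  shows "exprel x \<le> b * exprel (b * x)"
proof -
  have "exp (b * x) \<le> exp x"
    using assms by (simp add: mult_le_cancel_right1)
  with assms have "(exp x - 1) / x \<le> (exp (b * x) - 1) / x"
    by (simp add: divide_right_mono_neg)
  with assms show ?thesis
    by (simp add: exprel_def)
qed

definition exprel_ratio :: "real \<Rightarrow> real \<Rightarrow> real \<Rightarrow> real" where
  "exprel_ratio a b s = (exprel s)\<^sup>2 / (exprel (a * s) * exprel (b * s))"

lemma exprel_ratio_tendsto: "(exprel_ratio a b \<longlongrightarrow> 1) (at 0)"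
proof -
  have "isCont (exprel_ratio a b) 0"
    unfolding exprel_ratio_def using exprel_pos
    by (intro continuous_intros) (auto simp: less_imp_neq[symmetric])
  then show ?thesis
    by (simp add: isCont_def exprel_ratio_def exprel_def)
qed

lemma exprel_ratio_antimono:
  assumes "0 \<le> s" "b \<le> b'"
  shows "exprel_ratio a b' s \<le> exprel_ratio a b s"
  unfolding exprel_ratio_def using assms exprel_pos
  by (intro divide_left_mono mult_left_mono monoD[OF mono_exprel] mult_pos_pos mult_right_mono)
     (auto simp: less_imp_le)

lemma exprel_ratio_le_1:
  assumes "a + b = 2"
  shows "exprel_ratio a b s \<le> 1"
proof -
  have "(a * s + b * s) / 2 = (a + b) * s / 2"
    by (simp add: algebra_simps)
  also have "\<dots> = s"
    using assms by simp
  finally have "(a * s + b * s) / 2 = s" .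
  then have "(exprel s)\<^sup>2 \<le> exprel (a * s) * exprel (b * s)"
    using exprel_midpoint_log_convex[of "a * s" "b * s"] by simp
  then show ?thesis
    by (simp add: exprel_ratio_def exprel_pos)
qed

lemma exprel_ratio_le_of_neg:
  assumes "a \<le> 1" "1 \<le> b" "s < 0"
  shows "exprel_ratio a b s \<le> b"
proof -
  have "exprel s \<le> exprel (a * s)"
    using assms by (intro monoD[OF mono_exprel]) (simp add: mult_le_cancel_right1)
  then have "exprel_ratio a b s \<le> (exprel s)\<^sup>2 / (exprel s * exprel (b * s))"
    unfolding exprel_ratio_def using exprel_pos
    by (intro divide_left_mono mult_right_mono mult_pos_pos) (auto simp: less_imp_le)
  also have "\<dots> = exprel s / exprel (b * s)"
    using exprel_pos[of s] by (simp add: power2_eq_square)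
  also have "\<dots> \<le> b"
    using exprel_le_scaled[OF assms(2,3)] exprel_pos[of "b * s"] by (simp add: divide_le_eq)
  finally show ?thesis .
qed

lemma exprel_ratio_le_of_pos:
  assumes "a \<le> 0" "2 \<le> b" "0 < s"
  shows "exprel_ratio a b s \<le> 2 * (1 - a)"
proof -
  define c where "c = 2 * exprel s / (exp s + 1)"
  have "c > 0"
    unfolding c_def by (intro divide_pos_pos mult_pos_pos exprel_pos add_pos_pos) auto
  have "exprel_ratio a b s \<le> exprel_ratio a 2 s"
    using assms by (intro exprel_ratio_antimono) auto
  also have "\<dots> = c * (1 / exprel (a * s))"
    unfolding exprel_ratio_def exprel_double c_def using exprel_pos[of s]
    by (simp add: power2_eq_square ac_simps)
  also have "\<dots> \<le> c * (1 - a * s)"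
  proof (rule mult_left_mono)
    have "1 \<le> exprel (a * s) * (1 - a * s)"
      using assms by (intro exprel_times_one_minus_ge_1) (simp add: mult_nonpos_nonneg)
    then show "1 / exprel (a * s) \<le> 1 - a * s"
      using exprel_pos[of "a * s"] by (simp add: divide_le_eq mult.commute)
  qed (use \<open>c > 0\<close> in simp)
  also have "\<dots> \<le> 2 * (1 - a)"
  proof -
    have "exprel s * (1 - a * s) = exprel s - a * (exp s - 1)"
      by (simp add: algebra_simps exprel_times[of s, symmetric])
    also have "\<dots> \<le> (1 - a) * (exp s + 1)"
      using assms exprel_le_exp[of s] by (simp add: algebra_simps mult_left_mono_neg)
    finally have "2 * exprel s * (1 - a * s) \<le> 2 * (1 - a) * (exp s + 1)"
      by linarith
    then show ?thesis
      unfolding c_def by (simp add: divide_simps add_pos_pos)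
  qed
  finally show ?thesis .
qed

lemma exprel_ratio_minus_one: "exprel_ratio (- 1) b s = exp s * exprel s / exprel (b * s)"
proof -
  have minus: "exprel (- s) = exprel s / exp s"
    by (simp add: exprel_minus exp_minus divide_inverse mult.commute)
  show ?thesis
    unfolding exprel_ratio_def using exprel_pos[of s] by (simp add: minus power2_eq_square)
qed

lemma exprel_ratio_minus_one_le:
  assumes "2 \<le> b"
  shows "exprel_ratio (- 1) b s \<le> b"
proof (cases "s < 0")
  case True
  with assms show ?thesis
    by (intro exprel_ratio_le_of_neg) auto
next
  case False
  have "exp s * exprel s = 2 * exprel (2 * s) - exprel s"
    unfolding exprel_double by (simp add: algebra_simps)
  also have "\<dots> \<le> 2 * exprel (b * s)"
    using assms False exprel_pos[of s] monoD[OF mono_exprel, of "2 * s" "b * s"]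
    by (simp add: mult_right_mono)
  also have "\<dots> \<le> b * exprel (b * s)"
    using assms exprel_pos[of "b * s"] by (simp add: mult_right_mono)
  finally show ?thesis
    using exprel_pos[of "b * s"] by (simp add: exprel_ratio_minus_one divide_le_eq)
qed

lemma exprel_ratio_minus_one_two: "exprel_ratio (- 1) 2 s = 2 * exp s / (exp s + 1)"
  unfolding exprel_ratio_minus_one exprel_double using exprel_pos[of s] by simp

lemma exprel_ratio_le_bound:
  fixes p \<alpha> :: real
  assumes "\<alpha> > 0" "p > 0" "p \<le> max (\<alpha> / 2) (\<alpha> - 1)" "s \<noteq> 0"
  shows "exprel_ratio ((p - 1) / p) (\<alpha> / p) s \<le> (\<alpha> + 2) / p"
proof -
  have "p \<le> \<alpha>"
    using assms by (auto simp: max_def split: if_splits)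
  consider "s < 0" | "0 < s" "p + 1 \<le> \<alpha>" | "0 < s" "\<alpha> < p + 1"
    using assms(4) by linarith
  then show ?thesis
  proof cases
    case 1
    have "exprel_ratio ((p - 1) / p) (\<alpha> / p) s \<le> \<alpha> / p"
      using 1 assms \<open>p \<le> \<alpha>\<close> by (intro exprel_ratio_le_of_neg) (auto simp: field_simps)
    also have "\<dots> \<le> (\<alpha> + 2) / p"
      using assms by (simp add: divide_right_mono)
    finally show ?thesis .
  next
    case 2
    have "exprel_ratio ((p - 1) / p) (\<alpha> / p) s \<le> exprel_ratio ((p - 1) / p) (2 - (p - 1) / p) s"
      using 2 assms mult_right_mono[of "1 + p" \<alpha> p] by (intro exprel_ratio_antimono) (auto simp: field_simps)
    also have "\<dots> \<le> 1"
      by (rule exprel_ratio_le_1) simp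
    also have "1 \<le> (\<alpha> + 2) / p"
      using 2 assms by (simp add: field_simps)
    finally show ?thesis .
  next
    case 3
    then have "p < 1" "2 * p \<le> \<alpha>"
      using assms by (auto simp: max_def split: if_splits)
    have "exprel_ratio ((p - 1) / p) (\<alpha> / p) s \<le> 2 * (1 - (p - 1) / p)"
      using 3 assms \<open>p < 1\<close> \<open>2 * p \<le> \<alpha>\<close>
      by (intro exprel_ratio_le_of_pos) (auto simp: field_simps)
    also have "\<dots> \<le> (\<alpha> + 2) / p"
      using assms by (simp add: field_simps)
    finally show ?thesis .
  qed
qed

lemma Phi_exp_minus_one:
  assumes "p \<noteq> 0"
  shows "Phi p \<alpha> (exp s - 1)
    = ereal (\<alpha>\<^sup>2 / p\<^sup>2 * s\<^sup>2 * exprel ((p - 1) / p * s) * exprel (\<alpha> / p * s))"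
proof -
  have powr: "exp s powr r - 1 = r * s * exprel (r * s)" for r
    by (simp add: powr_def exprel_times mult.commute)
  show ?thesis
  proof (cases "p = 1")
    case True
    then show ?thesis
      by (simp add: Phi_def powr power2_eq_square exprel_def[of 0])
  next
    case False
    then have "Phi p \<alpha> (exp s - 1)
      = ereal (\<alpha> / (p - 1) * ((p - 1) / p * s * exprel ((p - 1) / p * s)) * (\<alpha> / p * s * exprel (\<alpha> / p * s)))"
      by (simp add: Phi_def powr)
    also have "\<dots> = ereal (\<alpha>\<^sup>2 / p\<^sup>2 * s\<^sup>2 * exprel ((p - 1) / p * s) * exprel (\<alpha> / p * s))"
      using False by (simp add: power2_eq_square)
    finally show ?thesis .
  qed
qed

lemma Mhat_term_le:
  "z \<noteq> 0 \<Longrightarrow> ereal (\<alpha>\<^sup>2 / (4 * p\<^sup>2) * z\<^sup>2) / Phi p \<alpha> z \<le> Mhat p \<alpha>"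
  unfolding Mhat_def by (intro SUP_upper) auto

lemma Mhat_term_exp_minus_one:
  assumes "p \<noteq> 0" "\<alpha> \<noteq> 0" "s \<noteq> 0"
  shows "ereal (\<alpha>\<^sup>2 / (4 * p\<^sup>2) * (exp s - 1)\<^sup>2) / Phi p \<alpha> (exp s - 1)
    = ereal (exprel_ratio ((p - 1) / p) (\<alpha> / p) s / 4)"
proof -
  define P where "P = \<alpha>\<^sup>2 / p\<^sup>2 * s\<^sup>2 * exprel ((p - 1) / p * s) * exprel (\<alpha> / p * s)"
  have Phi: "Phi p \<alpha> (exp s - 1) = ereal P"
    unfolding P_def by (rule Phi_exp_minus_one[OF assms(1)])
  have "P \<noteq> 0"
    using assms by (simp add: P_def)
  have "\<alpha>\<^sup>2 / (4 * p\<^sup>2) * (exp s - 1)\<^sup>2 / P = exprel_ratio ((p - 1) / p) (\<alpha> / p) s / 4"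
    unfolding P_def exprel_ratio_def exprel_times[of s, symmetric]
    using assms by (simp add: field_simps power2_eq_square)
  with \<open>P \<noteq> 0\<close> show ?thesis
    by (simp add: Phi)
qed

lemma Mhat_lower:
  assumes "p \<noteq> 0" "\<alpha> \<noteq> 0" "s \<noteq> 0"
  shows "ereal (exprel_ratio ((p - 1) / p) (\<alpha> / p) s / 4) \<le> Mhat p \<alpha>"
proof -
  have "exp s - 1 \<noteq> 0"
    using assms(3) by simp
  from Mhat_term_le[OF this, of \<alpha> p] show ?thesis
    by (simp only: Mhat_term_exp_minus_one[OF assms])
qed

lemma Mhat_upper:
  assumes "p \<noteq> 0" "\<alpha> \<noteq> 0" "0 \<le> K" "\<And>s. s \<noteq> 0 \<Longrightarrow> exprel_ratio ((p - 1) / p) (\<alpha> / p) s \<le> K"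
  shows "Mhat p \<alpha> \<le> ereal (K / 4)"
  unfolding Mhat_def
proof (rule SUP_least)
  fix z :: real
  assume "z \<in> UNIV - {0}"
  show "ereal (\<alpha>\<^sup>2 / (4 * p\<^sup>2) * z\<^sup>2) / Phi p \<alpha> z \<le> ereal (K / 4)"
  proof (cases "z \<le> -1")
    case True
    with assms show ?thesis by (simp add: Phi_def)
  next
    case False
    define s where "s = ln (z + 1)"
    have z: "z = exp s - 1" "s \<noteq> 0"
      using False \<open>z \<in> UNIV - {0}\<close> by (auto simp: s_def)
    show ?thesis
      unfolding z(1) Mhat_term_exp_minus_one[OF assms(1,2) z(2)] using assms(4)[OF z(2)] by simp
  qed
qed

lemma Mhat_ge_quarter:
  assumes "p \<noteq> 0" "\<alpha> \<noteq> 0"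
  shows "ereal (1 / 4) \<le> Mhat p \<alpha>"
proof (rule tendsto_upperbound)
  show "((\<lambda>s. ereal (exprel_ratio ((p - 1) / p) (\<alpha> / p) s / 4)) \<longlongrightarrow> ereal (1 / 4)) (at 0)"
    by (intro tendsto_ereal tendsto_divide exprel_ratio_tendsto tendsto_const) simp
  show "\<forall>\<^sub>F s in at 0. ereal (exprel_ratio ((p - 1) / p) (\<alpha> / p) s / 4) \<le> Mhat p \<alpha>"
    using eventually_neq_at_within[of 0 0 UNIV] by eventually_elim (rule Mhat_lower[OF assms])
qed simp

lemma Mhat_finite:
  assumes "\<alpha> > 0" "p > 0" "p \<le> max (\<alpha> / 2) (\<alpha> - 1)"
  obtains M where "Mhat p \<alpha> = ereal M"
proof -
  have "Mhat p \<alpha> \<le> ereal ((\<alpha> + 2) / p / 4)"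
    using assms by (intro Mhat_upper exprel_ratio_le_bound) auto
  moreover have "ereal (1 / 4) \<le> Mhat p \<alpha>"
    using assms by (intro Mhat_ge_quarter) auto
  ultimately show ?thesis
    using that by (cases "Mhat p \<alpha>") auto
qed

lemma quadratic_young:
  fixes m P z \<xi> :: real
  assumes "0 < m" "z\<^sup>2 \<le> 4 * m * P"
  shows "\<xi> * z - P \<le> m * \<xi>\<^sup>2"
proof -
  have "4 * m * (\<xi> * z - P) \<le> 4 * m * \<xi> * z - z\<^sup>2"
    using assms(2) by (simp add: algebra_simps)
  also have "\<dots> \<le> 4 * m * (m * \<xi>\<^sup>2)"
    using zero_le_power2[of "2 * m * \<xi> - z"] by (simp add: power2_eq_square algebra_simps)
  finally show ?thesis
    using assms(1) by simp
qed

lemma PhiStar_le_Mhat: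
  assumes "p > 0" "\<alpha> > 0" "Mhat p \<alpha> = ereal M"
  shows "PhiStar p \<alpha> \<xi> \<le> ereal (M * (p / \<alpha> * \<xi>)\<^sup>2)"
  unfolding PhiStar_def
proof (rule SUP_least)
  fix z :: real
  have "M \<ge> 1 / 4"
    using Mhat_ge_quarter[of p \<alpha>] assms by simp
  show "ereal (\<xi> * z) - Phi p \<alpha> z \<le> ereal (M * (p / \<alpha> * \<xi>)\<^sup>2)"
  proof (cases "z \<le> -1")
    case True
    then show ?thesis by (simp add: Phi_def)
  next
    case False
    define s where "s = ln (z + 1)"
    define P where "P = \<alpha>\<^sup>2 / p\<^sup>2 * s\<^sup>2 * exprel ((p - 1) / p * s) * exprel (\<alpha> / p * s)"
    have z: "z = exp s - 1"
      using False by (simp add: s_def)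
    have Phi: "Phi p \<alpha> z = ereal P"
      using assms by (simp add: z P_def Phi_exp_minus_one)
    have "\<xi> * z - P \<le> M * (p / \<alpha> * \<xi>)\<^sup>2"
    proof (cases "s = 0")
      case True
      with \<open>M \<ge> 1 / 4\<close> show ?thesis by (simp add: z P_def)
    next
      case False
      have "P > 0"
        using assms False unfolding P_def by (intro mult_pos_pos exprel_pos) auto
      have "z \<noteq> 0"
        using False by (simp add: z)
      then have "ereal (\<alpha>\<^sup>2 / (4 * p\<^sup>2) * z\<^sup>2 / P) \<le> ereal M"
        using Mhat_term_le[of z \<alpha> p] assms(3) \<open>P > 0\<close> by (simp add: Phi)
      then have "\<alpha>\<^sup>2 / (4 * p\<^sup>2) * z\<^sup>2 / P \<le> M"
        by simp
      then have "\<alpha>\<^sup>2 / (4 * p\<^sup>2) * z\<^sup>2 \<le> M * P"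
        using \<open>P > 0\<close> by (simp only: pos_divide_le_eq)
      then have "z\<^sup>2 \<le> 4 * (M * (p / \<alpha>)\<^sup>2) * P"
        using assms by (simp add: field_simps power2_eq_square)
      then show ?thesis
        using quadratic_young[of "M * (p / \<alpha>)\<^sup>2" z P \<xi>] assms \<open>M \<ge> 1 / 4\<close>
        by (simp add: power_mult_distrib power_divide)
    qed
    then show ?thesis by (simp add: Phi)
  qed
qed

lemma Mhat_half_le:
  assumes "1 \<le> \<alpha>"
  shows "Mhat (1 / 2) \<alpha> \<le> ereal (\<alpha> / 2)"
proof -
  have "Mhat (1 / 2) \<alpha> \<le> ereal (\<alpha> * 2 / 4)"
    using assms by (intro Mhat_upper) (auto intro!: exprel_ratio_minus_one_le)
  then show ?thesis
    by simp
qed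

lemma Mhat_half_one_ge: "ereal (1 / 2) \<le> Mhat (1 / 2) 1"
proof (rule tendsto_upperbound)
  show "((\<lambda>s. ereal (exprel_ratio (- 1) 2 s / 4)) \<longlongrightarrow> ereal (1 / 2)) at_top"
    unfolding exprel_ratio_minus_one_two by (intro tendsto_ereal) real_asymp
  show "\<forall>\<^sub>F s in at_top. ereal (exprel_ratio (- 1) 2 s / 4) \<le> Mhat (1 / 2) 1"
    using eventually_gt_at_top[of 0] by eventually_elim (use Mhat_lower[of "1 / 2" 1] in simp)
qed simp

lemma Mhat_succ_le_quarter:
  assumes "p > 0"
  shows "Mhat p (p + 1) \<le> ereal (1 / 4)"
proof (rule Mhat_upper)
  fix s :: real
  have "(p - 1) / p + (p + 1) / p = 2"
    using assms by (simp add: field_simps)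
  then show "exprel_ratio ((p - 1) / p) ((p + 1) / p) s \<le> 1"
    by (rule exprel_ratio_le_1)
qed (use assms in auto)

theorem mainTheorem12:
  fixes p \<alpha> :: real
  assumes "\<alpha> > 0" and "p > 0" and "p \<le> max (\<alpha> / 2) (\<alpha> - 1)"
  shows "Mhat p \<alpha> < \<infinity>
    \<and> (\<forall>\<xi>::real. PhiStar p \<alpha> \<xi> \<le> Mhat p \<alpha> * ereal ((p / \<alpha> * \<xi>)\<^sup>2))
    \<and> (Mhat p \<alpha> \<ge> 1 / 4)
    \<and> (p = 1 / 2 \<and> \<alpha> \<ge> 1 \<longrightarrow> Mhat p \<alpha> \<le> ereal (\<alpha> / 2))
    \<and> (p = 1 / 2 \<and> \<alpha> = 1 \<longrightarrow> Mhat p \<alpha> = 1 / 2)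
    \<and> (\<alpha> = p + 1 \<longrightarrow> Mhat p \<alpha> = 1 / 4)"
proof -
  obtain M where M: "Mhat p \<alpha> = ereal M"
    using Mhat_finite[OF assms] .
  have quarter: "ereal (1 / 4) \<le> Mhat p \<alpha>"
    using assms by (intro Mhat_ge_quarter) auto
  have ereal_consts: "(1 / 4 :: ereal) = ereal (1 / 4)" "(1 / 2 :: ereal) = ereal (1 / 2)"
    by (simp_all add: one_ereal_def numeral_eq_ereal)
  show ?thesis
  proof (intro conjI allI impI)
    show "Mhat p \<alpha> < \<infinity>"
      by (simp add: M)
    show "PhiStar p \<alpha> \<xi> \<le> Mhat p \<alpha> * ereal ((p / \<alpha> * \<xi>)\<^sup>2)" for \<xi>
      using PhiStar_le_Mhat[OF assms(2,1) M] by (simp add: M)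
    show "1 / 4 \<le> Mhat p \<alpha>"
      unfolding ereal_consts by (rule quarter)
    show "Mhat p \<alpha> \<le> ereal (\<alpha> / 2)" if "p = 1 / 2 \<and> 1 \<le> \<alpha>"
      using that Mhat_half_le[of \<alpha>] by (elim conjE) (simp only:)
    show "Mhat p \<alpha> = 1 / 2" if "p = 1 / 2 \<and> \<alpha> = 1"
      unfolding ereal_consts using antisym[OF Mhat_half_le[of 1] Mhat_half_one_ge] that
      by (elim conjE) (simp only:)
    show "Mhat p \<alpha> = 1 / 4" if "\<alpha> = p + 1"
      unfolding ereal_consts using that Mhat_succ_le_quarter[OF assms(2)] quarter by simp
  qed
qed

end
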